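(* Let $v^1,\dots,v^p\in\mathbb{R}^n$ and let $\mathscr V\subset\mathbb{R}_{\max}^n$ be the max-plus cone they generate. If $y\in\mathbb{R}_{\max}^n$ does not belong to $\mathscr V$, then there exist disjoint sets $I,J$ with $I\cup J=\{1,\dots,n\}$ and $a\in\mathbb{R}^n$ such that the half-space $\{x\in\mathbb{R}_{\max}^n:\bigoplus_{i\in I}a_ix_i\le\bigoplus_{j\in J}a_jx_j\}$ contains $\mathscr V$ but not $y$, and its apex $-a$ is a vertex of the natural cell decomposition of $\mathbb{R}_{\max}^n$ induced by $v^1,\dots,v^p$.
   Context: $\mathbb{R}_{\max}=\mathbb{R}\cup\{-\infty\}$ with $a\oplus b=\max(a,b)$, $ab=a+b$; the max-plus cone generated by $v^1,\dots,v^p$ is $\{\bigoplus_r\lambda_rv^r:\lambda_r\in\mathbb{R}_{\max}\}$, where $(\lambda v)_k=\lambda+v_k$. The apex of the half-space $\{x:\bigoplus_{i\in I}a_ix_i\le\bigoplus_{j\in J}a_jx_j\}$ (with $I,J$ a partition of $\{1,\dots,n\}$ and $a\in\mathbb{R}^n$) is $-a$. For $x\in\mathbb{R}^n$, the type of $x$ is $(S_1(x),\dots,S_n(x))$ with $S_j(x)=\{r: v^r_j-x_j=\max_{k}(v^r_k-x_k)\}$. For an $n$-tuple $S=(S_1,\dots,S_n)$ of subsets of $\{1,\dots,p\}$, the cell $X_S=\{x: S_j\subset S_j(x)\ \forall j\}$; the natural cell decomposition is the collection of cells $X_S$, $S$ ranging over types. A vertex of this decomposition is a vector $x\in\mathbb{R}^n$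 whose cell $X_{\mathrm{type}(x)}$ is one-dimensional, i.e. equals $\{\lambda+x:\lambda\in\mathbb{R}\}$ (equivalently, the graph on $\{1,\dots,n\}$ with an edge $\{i,j\}$ whenever $S_i(x)\cap S_j(x)\neq\emptyset$ is connected). *)

theory Defs
  imports "HOL-Analysis.Analysis"
begin

text \<open>Max-plus semiring R_max = R union {-infinity}, modelled inside ereal:
  an element of R_max^n is a vector x :: ereal^'n with no component equal to +infinity.\<close>

definition rmax_vec :: "(ereal^'n) set" where
  "rmax_vec = {x. \<forall>k. x $ k \<noteq> \<infinity>}"

definition mp_cone :: "('p::finite \<Rightarrow> real^'n) \<Rightarrow> (ereal^'n) set" where
  "mp_cone v = {x. \<exists>lam :: 'p \<Rightarrow> ereal. (\<forall>r. lam r \<noteq> \<infinity>) \<and>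
                    x = (\<chi> k. (SUP r. lam r + ereal (v r $ k)))}"

definition mp_halfspace :: "'n set \<Rightarrow> 'n set \<Rightarrow> real^'n \<Rightarrow> (ereal^'n) set" where
  "mp_halfspace I J a = {x \<in> rmax_vec.
      (SUP i\<in>I. ereal (a $ i) + x $ i) \<le> (SUP j\<in>J. ereal (a $ j) + x $ j)}"

definition mp_type :: "('p::finite \<Rightarrow> real^'n) \<Rightarrow> real^'n \<Rightarrow> 'n::finite \<Rightarrow> 'p set" where
  "mp_type v x j = {r. v r $ j - x $ j = (MAX k. v r $ k - x $ k)}"

definition mp_cell :: "('p::finite \<Rightarrow> real^'n) \<Rightarrow> ('n::finite \<Rightarrow> 'p set) \<Rightarrow> (real^'n) set" where
  "mp_cell v S = {x. \<forall>j. S j \<subseteq> mp_type v x j}"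

definition mp_vertex :: "('p::finite \<Rightarrow> real^'n) \<Rightarrow> real^'n::finite \<Rightarrow> bool" where
  "mp_vertex v x \<longleftrightarrow> mp_cell v (mp_type v x) = {z. \<exists>lam::real. z = (\<chi> k. lam + x $ k)}"

end

theory Submission
  imports Defs
begin

text \<open>
Write M(c) for the set of coordinates k at which y_k - c_k is maximal, k ranging over the finite
coordinates of y. If every generator v^r attains max_k (v^r_k - c_k) at some coordinate outside
M(c), then the half-space with I = M(c), J its complement and apex c contains every generator,
hence the whole cone, while y violates it. Such an apex exists because y is not in the cone. Among
all of them take one maximising first the number of incidences r \<in> S_k(c) and then |M(c)|. If it
were not a vertex, some proper union A of connected components of its type graph would be
available; raising c on A until a new incidence, or a new maximiser of y - c, appears produces a
better apex.
\<close>

lemma SUP_finite_attained: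
  fixes g :: "'a \<Rightarrow> 'b::complete_linorder"
  assumes "finite S" and "S \<noteq> {}"
  obtains s where "s \<in> S" and "(SUP x\<in>S. g x) = g s"
proof -
  have "(SUP x\<in>S. g x) \<in> g ` S"
    using assms Max_in[of "g ` S"] Max_Sup[of "g ` S"] by simp
  then show ?thesis using that by blast
qed

lemma SUP_finite_less:
  fixes g :: "'a \<Rightarrow> 'b::complete_linorder"
  assumes "finite S" and "\<And>x. x \<in> S \<Longrightarrow> g x < b" and "bot < b"
  shows "(SUP x\<in>S. g x) < b"
proof (cases "S = {}")
  case False
  obtain s where "s \<in> S" "(SUP x\<in>S. g x) = g s" by (rule SUP_finite_attained[OF assms(1) False])
  then show ?thesis using assms(2) by simp
qed (use assms(3) in simp)

lemma ereal_Max_range: "ereal (Max (range g)) = (SUP r. ereal (g r))"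
  for g :: "'a::finite \<Rightarrow> real"
proof -
  have "mono ereal" by (rule monoI) simp
  then have "ereal (Max (range g)) = Max (ereal ` range g)"
    by (rule mono_Max_commute) auto
  also have "\<dots> = (SUP r. ereal (g r))" by (simp add: Max_Sup image_comp)
  finally show ?thesis .
qed

section \<open>Argmax sets of w - c\<close>

text \<open>Both the type of c (w = v^r, K = UNIV) and M(c) (w = y on its finite coordinates K)
  are argmax sets of w - c over K.\<close>

definition dev_max :: "'n set \<Rightarrow> ('n \<Rightarrow> real) \<Rightarrow> real^'n::finite \<Rightarrow> real" where
  "dev_max K w c = Max ((\<lambda>k. w k - c $ k) ` K)"

definition dev_argmax :: "'n set \<Rightarrow> ('n \<Rightarrow> real) \<Rightarrow> real^'n::finite \<Rightarrow> 'n set" where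
  "dev_argmax K w c = {k \<in> K. w k - c $ k = dev_max K w c}"

definition dev_slack :: "'n set \<Rightarrow> ('n \<Rightarrow> real) \<Rightarrow> real^'n::finite \<Rightarrow> 'n \<Rightarrow> real" where
  "dev_slack K w c k = dev_max K w c - (w k - c $ k)"

definition raise_on :: "'n set \<Rightarrow> real \<Rightarrow> real^'n \<Rightarrow> real^'n" where
  "raise_on A t c = (\<chi> k. if k \<in> A then c $ k + t else c $ k)"

lemma raise_on_nth: "raise_on A t c $ k = (if k \<in> A then c $ k + t else c $ k)"
  by (simp add: raise_on_def)

lemma dev_le_dev_max: "k \<in> K \<Longrightarrow> w k - c $ k \<le> dev_max K w c"
  unfolding dev_max_def by (rule Max_ge) auto

lemma dev_slack_nonneg: "k \<in> K \<Longrightarrow> 0 \<le> dev_slack K w c k"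
  using dev_le_dev_max[of k K w c] by (simp add: dev_slack_def)

lemma dev_slack_eq_0_iff: "k \<in> K \<Longrightarrow> dev_slack K w c k = 0 \<longleftrightarrow> k \<in> dev_argmax K w c"
  by (auto simp: dev_slack_def dev_argmax_def)

lemma dev_slack_pos: "k \<in> K \<Longrightarrow> k \<notin> dev_argmax K w c \<Longrightarrow> 0 < dev_slack K w c k"
  using dev_slack_nonneg[of k K w c] dev_slack_eq_0_iff[of k K w c] by linarith

lemma dev_argmax_nonempty: "K \<noteq> {} \<Longrightarrow> dev_argmax K w c \<noteq> {}"
proof -
  assume "K \<noteq> {}"
  then have "dev_max K w c \<in> (\<lambda>k. w k - c $ k) ` K"
    unfolding dev_max_def by (intro Max_in) auto
  then show ?thesis by (auto simp: dev_argmax_def)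
qed

lemma dev_max_eqI:
  assumes "\<And>k. k \<in> K \<Longrightarrow> w k - c $ k \<le> m" and "k0 \<in> K" and "w k0 - c $ k0 = m"
  shows "dev_max K w c = m"
  unfolding dev_max_def using assms by (intro Max_eqI) force+

lemma dev_max_raise_off:
  assumes "\<not> dev_argmax K w c \<subseteq> A" and "0 \<le> t"
  shows "dev_max K w (raise_on A t c) = dev_max K w c"
proof -
  obtain k0 where k0: "k0 \<in> dev_argmax K w c" "k0 \<notin> A" using assms(1) by blast
  show ?thesis
  proof (rule dev_max_eqI)
    fix k assume "k \<in> K"
    then show "w k - raise_on A t c $ k \<le> dev_max K w c"
      using dev_le_dev_max[of k K w c] assms(2) by (simp add: raise_on_nth)
  qed (use k0 in \<open>auto simp: dev_argmax_def raise_on_nth\<close>)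
qed

lemma dev_argmax_raise_off:
  assumes "\<not> dev_argmax K w c \<subseteq> A" and "0 < t"
  shows "dev_argmax K w (raise_on A t c) = dev_argmax K w c - A"
proof -
  have "dev_max K w (raise_on A t c) = dev_max K w c"
    using assms by (intro dev_max_raise_off) auto
  then show ?thesis
    using assms(2) dev_le_dev_max[of _ K w c] unfolding dev_argmax_def
    by (force simp: raise_on_nth)
qed

lemma dev_max_raise_on:
  assumes "K \<noteq> {}" and "dev_argmax K w c \<subseteq> A"
    and "\<And>k. k \<in> K - A \<Longrightarrow> t \<le> dev_slack K w c k"
  shows "dev_max K w (raise_on A t c) = dev_max K w c - t"
proof -
  obtain k0 where k0: "k0 \<in> dev_argmax K w c" using dev_argmax_nonempty[OF assms(1)] by blast
  show ?thesis
  proof (rule dev_max_eqI)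
    fix k assume "k \<in> K"
    then show "w k - raise_on A t c $ k \<le> dev_max K w c - t"
      using dev_le_dev_max[of k K w c] assms(3)[of k] by (auto simp: raise_on_nth dev_slack_def)
  qed (use k0 assms(2) in \<open>auto simp: dev_argmax_def raise_on_nth\<close>)
qed

lemma dev_argmax_raise_on:
  assumes "K \<noteq> {}" and "dev_argmax K w c \<subseteq> A"
    and "\<And>k. k \<in> K - A \<Longrightarrow> t \<le> dev_slack K w c k"
  shows "dev_argmax K w (raise_on A t c) = dev_argmax K w c \<union> {k \<in> K - A. dev_slack K w c k = t}"
proof -
  have "dev_max K w (raise_on A t c) = dev_max K w c - t"
    using assms by (rule dev_max_raise_on)
  then show ?thesis
    using assms(2) unfolding dev_argmax_def dev_slack_def by (auto simp: raise_on_nth)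
qed

section \<open>Types and saturated coordinate sets\<close>

definition type_support :: "('p::finite \<Rightarrow> real^'n::finite) \<Rightarrow> real^'n \<Rightarrow> 'p \<Rightarrow> 'n set" where
  "type_support v c r = {k. r \<in> mp_type v c k}"

lemma type_support_eq_dev_argmax: "type_support v c r = dev_argmax UNIV (vec_nth (v r)) c"
  by (simp add: type_support_def mp_type_def dev_argmax_def dev_max_def)

lemma type_support_nonempty: "type_support v c r \<noteq> {}"
  by (simp add: type_support_eq_dev_argmax dev_argmax_nonempty)

lemma mp_cell_type_iff:
  "x \<in> mp_cell v (mp_type v c) \<longleftrightarrow> (\<forall>r. type_support v c r \<subseteq> type_support v x r)"
  by (auto simp: mp_cell_def type_support_def)

definition type_saturated :: "('p::finite \<Rightarrow> real^'n::finite) \<Rightarrow> real^'n \<Rightarrow> 'n set \<Rightarrow> bool" where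
  "type_saturated v c A \<longleftrightarrow> (\<forall>r. type_support v c r \<subseteq> A \<or> type_support v c r \<subseteq> - A)"

lemma type_support_raise_on:
  assumes "type_saturated v c A" and "0 < t"
    and "\<And>r k. type_support v c r \<subseteq> A \<Longrightarrow> k \<notin> A \<Longrightarrow> t \<le> dev_slack UNIV (vec_nth (v r)) c k"
  shows "type_support v (raise_on A t c) r = type_support v c r \<union>
           {k. type_support v c r \<subseteq> A \<and> k \<notin> A \<and> dev_slack UNIV (vec_nth (v r)) c k = t}"
proof (cases "type_support v c r \<subseteq> A")
  case True
  then show ?thesis
    using assms(3)[of r] unfolding type_support_eq_dev_argmax
    by (subst dev_argmax_raise_on) auto
next
  case False
  then have "type_support v c r \<subseteq> - A" using assms(1) by (auto simp: type_saturated_def)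
  then show ?thesis
    using False assms(2) unfolding type_support_eq_dev_argmax
    by (subst dev_argmax_raise_off) auto
qed

lemma type_support_shift: "type_support v (\<chi> k. lam + c $ k) r = type_support v c r"
proof -
  have shift: "(\<chi> k. lam + c $ k) = raise_on UNIV lam c"
    by (simp add: raise_on_def add.commute)
  show ?thesis
    unfolding type_support_eq_dev_argmax shift by (subst dev_argmax_raise_on) auto
qed

lemma type_saturated_of_not_vertex:
  assumes "\<not> mp_vertex v c"
  obtains A where "A \<noteq> {}" and "A \<noteq> UNIV" and "type_saturated v c A"
proof -
  let ?L = "{z. \<exists>lam::real. z = (\<chi> k. lam + c $ k)}"
  have "?L \<subseteq> mp_cell v (mp_type v c)"
    by (auto simp: mp_cell_type_iff type_support_shift)
  with assms obtain x where x: "x \<in> mp_cell v (mp_type v c)" "x \<notin> ?L"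
    unfolding mp_vertex_def by blast
  define d where "d k = x $ k - c $ k" for k
  define A where "A = {k. d k = Min (range d)}"
  have "Min (range d) \<in> range d" by (rule Min_in) auto
  then have "A \<noteq> {}" unfolding A_def by (metis (mono_tags) empty_iff mem_Collect_eq rangeE)
  moreover have "A \<noteq> UNIV"
  proof
    assume "A = UNIV"
    then have "x $ k - c $ k = Min (range d)" for k
      unfolding A_def d_def by (metis (mono_tags) UNIV_I mem_Collect_eq)
    then have "x = (\<chi> k. Min (range d) + c $ k)"
      by (simp add: vec_eq_iff algebra_simps)
    with x(2) show False by blast
  qed
  moreover have "type_saturated v c A"
    unfolding type_saturated_def
  proof
    fix r
    \<comment> \<open>both c and x are in the cell, so d is constant on the support of each generator\<close>
    have "d i = d j" if ij: "i \<in> type_support v c r" "j \<in> type_support v c r" for i j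
    proof -
      have "v r $ i - c $ i = v r $ j - c $ j"
        using ij by (simp add: type_support_eq_dev_argmax dev_argmax_def)
      moreover have "i \<in> type_support v x r" "j \<in> type_support v x r"
        using ij x(1) unfolding mp_cell_type_iff by blast+
      then have "v r $ i - x $ i = v r $ j - x $ j"
        by (simp add: type_support_eq_dev_argmax dev_argmax_def)
      ultimately show ?thesis unfolding d_def by linarith
    qed
    moreover obtain i where "i \<in> type_support v c r" using type_support_nonempty by blast
    ultimately show "type_support v c r \<subseteq> A \<or> type_support v c r \<subseteq> - A"
      unfolding A_def by (metis (mono_tags) ComplI mem_Collect_eq subsetI)
  qed
  ultimately show ?thesis using that by blast
qed

definition type_count :: "('p::finite \<Rightarrow> real^'n::finite) \<Rightarrow> real^'n \<Rightarrow> nat" where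
  "type_count v c = card {(r, k). k \<in> type_support v c r}"

lemma type_count_le: "type_count v c \<le> CARD('p) * CARD('n)"
  for v :: "'p::finite \<Rightarrow> real^'n::finite"
proof -
  have "type_count v c \<le> CARD('p \<times> 'n)"
    unfolding type_count_def by (rule card_mono) auto
  then show ?thesis by simp
qed

lemma type_count_mono:
  assumes "\<And>r. type_support v c r \<subseteq> type_support v c' r"
  shows "type_count v c \<le> type_count v c'"
  unfolding type_count_def using assms by (intro card_mono) auto

lemma type_count_strict_mono:
  assumes "\<And>r. type_support v c r \<subseteq> type_support v c' r"
    and "k \<in> type_support v c' r" and "k \<notin> type_support v c r"
  shows "type_count v c < type_count v c'"
  unfolding type_count_def
proof (rule psubset_card_mono)
  have "(r, k) \<notin> {(r, k). k \<in> type_support v c r}" using assms(3) by simp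
  moreover have "(r, k) \<in> {(r, k). k \<in> type_support v c' r}" using assms(2) by simp
  moreover have "{(r, k). k \<in> type_support v c r} \<subseteq> {(r, k). k \<in> type_support v c' r}"
    using assms(1) by auto
  ultimately show "{(r, k). k \<in> type_support v c r} \<subset> {(r, k). k \<in> type_support v c' r}"
    by blast
qed simp

section \<open>Separating apices\<close>

definition separating_apex ::
    "('p::finite \<Rightarrow> real^'n::finite) \<Rightarrow> 'n set \<Rightarrow> ('n \<Rightarrow> real) \<Rightarrow> real^'n \<Rightarrow> bool" where
  "separating_apex v K f c \<longleftrightarrow> (\<forall>r. \<not> type_support v c r \<subseteq> dev_argmax K f c)"

lemma mp_cone_subset_halfspace:
  fixes v :: "'p::finite \<Rightarrow> real^'n::finite"
  assumes "\<forall>r. \<not> type_support v c r \<subseteq> I"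
  shows "mp_cone v \<subseteq> mp_halfspace I (- I) (- c)"
proof
  fix x assume "x \<in> mp_cone v"
  then obtain lam :: "'p \<Rightarrow> ereal" where lam: "\<And>r. lam r \<noteq> \<infinity>"
    and "x = (\<chi> k. SUP r. lam r + ereal (v r $ k))"
    unfolding mp_cone_def by blast
  then have x: "x $ k = (SUP r. lam r + ereal (v r $ k))" for k by simp
  have upper: "lam r + ereal (v r $ k) \<le> x $ k" for r k
    unfolding x by (rule SUP_upper) simp
  have attained: "\<exists>r. x $ k = lam r + ereal (v r $ k)" for k
    using SUP_finite_attained[of "UNIV :: 'p set" "\<lambda>r. lam r + ereal (v r $ k)"]
    unfolding x by auto
  have "x $ k \<noteq> \<infinity>" for k
  proof -
    obtain r where "x $ k = lam r + ereal (v r $ k)" using attained by blast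
    then show ?thesis using lam[of r] by (cases "lam r") auto
  qed
  then have "x \<in> rmax_vec" by (simp add: rmax_vec_def)
  moreover have "(SUP i\<in>I. ereal ((- c) $ i) + x $ i) \<le> (SUP j\<in>- I. ereal ((- c) $ j) + x $ j)"
  proof (rule SUP_least)
    fix i assume "i \<in> I"
    obtain r where r: "x $ i = lam r + ereal (v r $ i)" using attained by blast
    obtain k where k: "k \<in> type_support v c r" "k \<notin> I" using assms by blast
    then have "v r $ i - c $ i \<le> v r $ k - c $ k"
      using dev_le_dev_max[of i UNIV "vec_nth (v r)" c]
      by (simp add: type_support_eq_dev_argmax dev_argmax_def)
    then have "ereal ((- c) $ i) + (lam r + ereal (v r $ i)) \<le> ereal ((- c) $ k) + (lam r + ereal (v r $ k))"
      using lam[of r] by (cases "lam r") auto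
    also have "\<dots> \<le> ereal ((- c) $ k) + x $ k" by (rule add_left_mono[OF upper])
    also have "\<dots> \<le> (SUP j\<in>- I. ereal ((- c) $ j) + x $ j)" by (rule SUP_upper) (use k in simp)
    finally show "ereal ((- c) $ i) + x $ i \<le> (SUP j\<in>- I. ereal ((- c) $ j) + x $ j)"
      using r by simp
  qed
  ultimately show "x \<in> mp_halfspace I (- I) (- c)" unfolding mp_halfspace_def by blast
qed

lemma notin_mp_halfspace_dev_argmax:
  assumes "K \<noteq> {}" and y: "\<And>k. y $ k = (if k \<in> K then ereal (f k) else -\<infinity>)"
  shows "y \<notin> mp_halfspace (dev_argmax K f c) (- dev_argmax K f c) (- c)"
proof
  let ?M = "dev_argmax K f c"
  assume "y \<in> mp_halfspace ?M (- ?M) (- c)"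
  then have le: "(SUP i\<in>?M. ereal ((- c) $ i) + y $ i) \<le> (SUP j\<in>- ?M. ereal ((- c) $ j) + y $ j)"
    unfolding mp_halfspace_def by blast
  obtain m where m: "m \<in> ?M" using dev_argmax_nonempty[OF assms(1)] by blast
  have "ereal (dev_max K f c) = ereal ((- c) $ m) + y $ m"
    using m y[of m] by (simp add: dev_argmax_def)
  also have "\<dots> \<le> (SUP i\<in>?M. ereal ((- c) $ i) + y $ i)" by (rule SUP_upper[OF m])
  also have "\<dots> \<le> (SUP j\<in>- ?M. ereal ((- c) $ j) + y $ j)" by (rule le)
  also have "\<dots> < ereal (dev_max K f c)"
  proof (rule SUP_finite_less)
    fix j assume "j \<in> - ?M"
    then show "ereal ((- c) $ j) + y $ j < ereal (dev_max K f c)"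
      using y[of j] dev_le_dev_max[of j K f c] by (auto simp: dev_argmax_def)
  qed (simp_all add: bot_ereal_def)
  finally show False by simp
qed

lemma separating_apex_exists_partial_support:
  fixes v :: "'p::finite \<Rightarrow> real^'n::finite"
  assumes "K \<noteq> UNIV"
  obtains c where "separating_apex v K f c"
proof -
  obtain k1 where k1: "k1 \<notin> K" using assms by blast
  define B where "B = Max (range (\<lambda>(r, k). \<bar>v r $ k\<bar>))"
  have B: "\<bar>v r $ k\<bar> \<le> B" for r k
    unfolding B_def by (rule Max_ge) (auto intro: image_eqI[of _ _ "(r, k)"])
  \<comment> \<open>with c high on K and low off K, every generator attains its maximum off K, while M(c) \<subseteq> K\<close>
  define c where "c = (\<chi> k. if k \<in> K then B + 1 else - (B + 1))"
  have "type_support v c r \<subseteq> - K" for r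
  proof
    fix k assume "k \<in> type_support v c r"
    then have "v r $ k1 - c $ k1 \<le> v r $ k - c $ k"
      using dev_le_dev_max[of k1 UNIV "vec_nth (v r)" c]
      by (simp add: type_support_eq_dev_argmax dev_argmax_def)
    then show "k \<in> - K" using B[of r k] B[of r k1] k1 by (auto simp: c_def split: if_splits)
  qed
  then have "separating_apex v K f c"
    using type_support_nonempty unfolding separating_apex_def dev_argmax_def by blast
  then show ?thesis by (rule that)
qed

lemma separating_apex_exists_full_support:
  fixes v :: "'p::finite \<Rightarrow> real^'n::finite"
  assumes "(\<chi> k. ereal (f k)) \<notin> mp_cone v"
  obtains c where "separating_apex v UNIV f c"
proof -
  \<comment> \<open>c is the largest element of the cone below f (max-plus residuation)\<close>
  define lam where "lam r = Min (range (\<lambda>l. f l - v r $ l))" for r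
  define c :: "real^'n" where "c = (\<chi> k. MAX r. lam r + v r $ k)"
  have c_ge: "lam r + v r $ k \<le> c $ k" for r k
    unfolding c_def by (simp add: Max_ge)
  have c_le: "c $ k \<le> f k" for k
  proof -
    have "c $ k \<in> range (\<lambda>r. lam r + v r $ k)" unfolding c_def by (simp add: Max_in)
    then obtain r where "c $ k = lam r + v r $ k" by blast
    moreover have "lam r \<le> f k - v r $ k" unfolding lam_def by (simp add: Min_le)
    ultimately show ?thesis by simp
  qed
  have "(\<chi> k. ereal (c $ k)) \<in> mp_cone v"
    unfolding mp_cone_def
    by (intro CollectI exI[of _ "\<lambda>r. ereal (lam r)"]) (simp add: c_def ereal_Max_range)
  with assms have "(\<chi> k. ereal (c $ k)) \<noteq> (\<chi> k. ereal (f k))" by auto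
  then obtain k2 where "c $ k2 \<noteq> f k2" by (auto simp: vec_eq_iff)
  then have "0 < dev_max UNIV f c"
    using c_le[of k2] dev_le_dev_max[of k2 UNIV f c] by simp
  have "\<not> type_support v c r \<subseteq> dev_argmax UNIV f c" for r
  proof -
    have "lam r \<in> range (\<lambda>l. f l - v r $ l)" unfolding lam_def by (simp add: Min_in)
    then obtain l where l: "lam r = f l - v r $ l" by blast
    then have cl: "c $ l = f l" using c_ge[of r l] c_le[of l] by simp
    have "dev_max UNIV (vec_nth (v r)) c = - lam r"
    proof (rule dev_max_eqI)
      show "v r $ k - c $ k \<le> - lam r" for k using c_ge[of r k] by simp
      show "v r $ l - c $ l = - lam r" using l cl by simp
    qed simp
    then have "l \<in> type_support v c r"
      using l cl by (simp add: type_support_eq_dev_argmax dev_argmax_def)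
    moreover have "l \<notin> dev_argmax UNIV f c"
      using cl \<open>0 < dev_max UNIV f c\<close> by (simp add: dev_argmax_def)
    ultimately show ?thesis by blast
  qed
  then have "separating_apex v UNIV f c" by (simp add: separating_apex_def)
  then show ?thesis by (rule that)
qed

lemma finite_coordinate_of_notin_mp_cone:
  assumes "y \<notin> mp_cone v"
  shows "\<exists>k. y $ k \<noteq> - \<infinity>"
proof (rule ccontr)
  assume "\<nexists>k. y $ k \<noteq> - \<infinity>"
  then have "y = (\<chi> k. SUP r. - \<infinity> + ereal (v r $ k))" by (simp add: vec_eq_iff)
  then have "y \<in> mp_cone v" unfolding mp_cone_def by (intro CollectI exI[of _ "\<lambda>r. - \<infinity>"]) simp
  with assms show False ..
qed

lemma separating_apex_exists:
  fixes v :: "'p::finite \<Rightarrow> real^'n::finite"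
  assumes "y \<notin> mp_cone v" and y: "\<And>k. y $ k = (if k \<in> K then ereal (f k) else - \<infinity>)"
  obtains c where "separating_apex v K f c"
proof (cases "K = UNIV")
  case True
  then have "y = (\<chi> k. ereal (f k))" by (simp add: vec_eq_iff y)
  with assms(1) True show ?thesis using that by (metis separating_apex_exists_full_support)
qed (use that separating_apex_exists_partial_support in blast)

section \<open>A separating apex of maximal potential is a vertex\<close>

definition apex_potential ::
    "('p::finite \<Rightarrow> real^'n::finite) \<Rightarrow> 'n set \<Rightarrow> ('n \<Rightarrow> real) \<Rightarrow> real^'n \<Rightarrow> nat" where
  "apex_potential v K f c = (CARD('n) + 1) * type_count v c + card (dev_argmax K f c)"

lemma card_dev_argmax_le: "card (dev_argmax K f c) \<le> CARD('n)"
  for c :: "real^'n::finite"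
  by (rule card_mono) auto

lemma apex_potential_bound:
  "apex_potential v K f c < (CARD('n) + 1) * (CARD('p) * CARD('n) + 1)"
  for v :: "'p::finite \<Rightarrow> real^'n::finite"
proof -
  have "apex_potential v K f c < (CARD('n) + 1) * (type_count v c + 1)"
    using card_dev_argmax_le[of K f c] by (simp add: apex_potential_def)
  also have "\<dots> \<le> (CARD('n) + 1) * (CARD('p) * CARD('n) + 1)"
    using type_count_le[of v c] by (intro mult_le_mono2) simp
  finally show ?thesis .
qed

lemma apex_potential_less:
  fixes v :: "'p::finite \<Rightarrow> real^'n::finite"
  assumes "type_count v c < type_count v c' \<or>
    type_count v c \<le> type_count v c' \<and> card (dev_argmax K f c) < card (dev_argmax K f c')"
  shows "apex_potential v K f c < apex_potential v K f c'"
  using assms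
proof
  assume "type_count v c < type_count v c'"
  then have "(CARD('n) + 1) * (type_count v c + 1) \<le> (CARD('n) + 1) * type_count v c'"
    by (intro mult_le_mono2) simp
  then show ?thesis
    using card_dev_argmax_le[of K f c] by (simp add: apex_potential_def)
next
  assume "type_count v c \<le> type_count v c' \<and> card (dev_argmax K f c) < card (dev_argmax K f c')"
  then show ?thesis
    unfolding apex_potential_def by (intro add_le_less_mono mult_le_mono2) auto
qed

lemma type_saturated_side:
  assumes "M \<noteq> {}" and "A \<noteq> {}" and "A \<noteq> UNIV" and sat: "type_saturated v c A"
  obtains B where "B \<noteq> UNIV" and "type_saturated v c B" and "\<exists>r. type_support v c r \<subseteq> B"
    and "\<not> M \<subseteq> B \<or> (\<forall>r. type_support v c r \<subseteq> B)"
proof -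
  have sat': "type_saturated v c (- A)" using sat by (auto simp: type_saturated_def)
  consider (inside) "\<exists>r. type_support v c r \<subseteq> A \<and> \<not> M \<subseteq> A"
    | (outside) "\<exists>r. type_support v c r \<subseteq> - A \<and> \<not> M \<subseteq> - A"
    | (neither) "\<forall>r. type_support v c r \<subseteq> A \<longrightarrow> M \<subseteq> A"
        "\<forall>r. type_support v c r \<subseteq> - A \<longrightarrow> M \<subseteq> - A"
    by blast
  then show ?thesis
  proof cases
    case inside
    then show ?thesis using that assms by blast
  next
    case outside
    then show ?thesis using that[of "- A"] assms sat' by auto
  next
    case neither
    show ?thesis
    proof (cases "\<forall>r. type_support v c r \<subseteq> A")
      case True
      then show ?thesis using that assms by blast
    next
      case False
      \<comment> \<open>some generator lies outside A, so M does, so no generator lies inside A\<close>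
      then have "\<forall>r. type_support v c r \<subseteq> - A"
        using neither sat \<open>M \<noteq> {}\<close> unfolding type_saturated_def by blast
      then show ?thesis using that[of "- A"] assms sat' by auto
    qed
  qed
qed

lemma raise_time_exists:
  fixes v :: "'p::finite \<Rightarrow> real^'n::finite"
  assumes "A \<noteq> UNIV" and r0: "type_support v c r0 \<subseteq> A"
  obtains t where "0 < t"
    and "\<And>r k. type_support v c r \<subseteq> A \<Longrightarrow> k \<notin> A \<Longrightarrow> t \<le> dev_slack UNIV (vec_nth (v r)) c k"
    and "\<And>k. dev_argmax K f c \<subseteq> A \<Longrightarrow> k \<in> K - A \<Longrightarrow> t \<le> dev_slack K f c k"
    and "(\<exists>r k. type_support v c r \<subseteq> A \<and> k \<notin> A \<and> dev_slack UNIV (vec_nth (v r)) c k = t) \<or>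
         (dev_argmax K f c \<subseteq> A \<and> (\<exists>k \<in> K - A. dev_slack K f c k = t))"
proof -
  define E1 where "E1 = {dev_slack UNIV (vec_nth (v r)) c k | r k. type_support v c r \<subseteq> A \<and> k \<notin> A}"
  define E2 where "E2 = {dev_slack K f c k | k. dev_argmax K f c \<subseteq> A \<and> k \<in> K - A}"
  have "finite E1"
    unfolding E1_def by (rule finite_subset[of _ "range (\<lambda>(r, k). dev_slack UNIV (vec_nth (v r)) c k)"]) auto
  moreover have "finite E2"
    unfolding E2_def by (rule finite_subset[of _ "range (dev_slack K f c)"]) auto
  ultimately have fin: "finite (E1 \<union> E2)" by simp
  obtain k1 where "k1 \<notin> A" using assms(1) by blast
  then have ne: "E1 \<union> E2 \<noteq> {}" using r0 unfolding E1_def by blast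
  have pos: "0 < e" if "e \<in> E1 \<union> E2" for e
    using that unfolding E1_def E2_def type_support_eq_dev_argmax
    by (auto intro!: dev_slack_pos)
  define t where "t = Min (E1 \<union> E2)"
  have t_le: "t \<le> e" if "e \<in> E1 \<union> E2" for e using fin that by (simp add: t_def)
  have t_in: "t \<in> E1 \<union> E2" unfolding t_def using fin ne by (rule Min_in)
  show ?thesis
  proof (rule that)
    show "0 < t" using t_in pos by blast
    show "t \<le> dev_slack UNIV (vec_nth (v r)) c k" if "type_support v c r \<subseteq> A" "k \<notin> A" for r k
      using that by (intro t_le) (auto simp: E1_def)
    show "t \<le> dev_slack K f c k" if "dev_argmax K f c \<subseteq> A" "k \<in> K - A" for k
      using that by (intro t_le) (auto simp: E2_def)
    show "(\<exists>r k. type_support v c r \<subseteq> A \<and> k \<notin> A \<and> dev_slack UNIV (vec_nth (v r)) c k = t) \<or>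
         (dev_argmax K f c \<subseteq> A \<and> (\<exists>k \<in> K - A. dev_slack K f c k = t))"
      using t_in unfolding E1_def E2_def by blast
  qed
qed

lemma raise_on_improves_apex:
  fixes v :: "'p::finite \<Rightarrow> real^'n::finite"
  assumes K: "K \<noteq> {}" and sep: "separating_apex v K f c"
    and A: "A \<noteq> UNIV" "type_saturated v c A" and r0: "type_support v c r0 \<subseteq> A"
    and side: "\<not> dev_argmax K f c \<subseteq> A \<or> (\<forall>r. type_support v c r \<subseteq> A)"
  obtains c' where "separating_apex v K f c'" and "apex_potential v K f c < apex_potential v K f c'"
proof -
  let ?M = "dev_argmax K f c"
  obtain t where t_pos: "0 < t"
    and t_types: "\<And>r k. type_support v c r \<subseteq> A \<Longrightarrow> k \<notin> A \<Longrightarrow> t \<le> dev_slack UNIV (vec_nth (v r)) c k"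
    and t_point: "\<And>k. ?M \<subseteq> A \<Longrightarrow> k \<in> K - A \<Longrightarrow> t \<le> dev_slack K f c k"
    and t_hit: "(\<exists>r k. type_support v c r \<subseteq> A \<and> k \<notin> A \<and> dev_slack UNIV (vec_nth (v r)) c k = t) \<or>
         (?M \<subseteq> A \<and> (\<exists>k \<in> K - A. dev_slack K f c k = t))"
    using raise_time_exists[OF A(1) r0] by blast
  define c' where "c' = raise_on A t c"
  have supp: "type_support v c' r = type_support v c r \<union>
      {k. type_support v c r \<subseteq> A \<and> k \<notin> A \<and> dev_slack UNIV (vec_nth (v r)) c k = t}" for r
    unfolding c'_def using A(2) t_pos t_types by (rule type_support_raise_on)
  then have supp_mono: "type_support v c r \<subseteq> type_support v c' r" for r by blast
  have count_less: "type_count v c < type_count v c'"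
    if "\<exists>r k. type_support v c r \<subseteq> A \<and> k \<notin> A \<and> dev_slack UNIV (vec_nth (v r)) c k = t"
  proof -
    from that obtain r k where "type_support v c r \<subseteq> A" "k \<notin> A"
      "dev_slack UNIV (vec_nth (v r)) c k = t" by blast
    then show ?thesis by (intro type_count_strict_mono[OF supp_mono, of k r]) (auto simp: supp)
  qed
  show ?thesis
  proof (cases "?M \<subseteq> A")
    case False
    then have "dev_argmax K f c' = ?M - A"
      unfolding c'_def using t_pos by (rule dev_argmax_raise_off)
    then have "separating_apex v K f c'"
      using sep supp_mono unfolding separating_apex_def by blast
    moreover have "apex_potential v K f c < apex_potential v K f c'"
      using False t_hit count_less by (intro apex_potential_less) blast
    ultimately show ?thesis by (rule that)
  next
    case True
    then have M': "dev_argmax K f c' = ?M \<union> {k \<in> K - A. dev_slack K f c k = t}"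
      unfolding c'_def using K t_point by (intro dev_argmax_raise_on) auto
    \<comment> \<open>every support lies in A, where the maximisers of y - c' are those of y - c\<close>
    have "separating_apex v K f c'"
      using sep side True supp_mono unfolding separating_apex_def M' by blast
    moreover have "apex_potential v K f c < apex_potential v K f c'"
    proof (rule apex_potential_less)
      have "card ?M < card (dev_argmax K f c')" if "\<exists>k \<in> K - A. dev_slack K f c k = t"
        using that True unfolding M' by (intro psubset_card_mono) auto
      then show "type_count v c < type_count v c' \<or>
          type_count v c \<le> type_count v c' \<and> card ?M < card (dev_argmax K f c')"
        using t_hit count_less type_count_mono[OF supp_mono] by blast
    qed
    ultimately show ?thesis by (rule that)
  qed
qed

lemma separating_apex_improvable:
  fixes v :: "'p::finite \<Rightarrow> real^'n::finite"
  assumes "K \<noteq> {}" and "separating_apex v K f c" and "\<not> mp_vertex v c"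
  obtains c' where "separating_apex v K f c'" and "apex_potential v K f c < apex_potential v K f c'"
proof -
  obtain A where "A \<noteq> {}" "A \<noteq> UNIV" "type_saturated v c A"
    using type_saturated_of_not_vertex[OF assms(3)] .
  moreover have "dev_argmax K f c \<noteq> {}" using assms(1) by (rule dev_argmax_nonempty)
  ultimately obtain B r0 where "B \<noteq> UNIV" "type_saturated v c B" "type_support v c r0 \<subseteq> B"
    "\<not> dev_argmax K f c \<subseteq> B \<or> (\<forall>r. type_support v c r \<subseteq> B)"
    using type_saturated_side by metis
  with assms(1,2) show ?thesis using raise_on_improves_apex that by blast
qed

lemma separating_vertex_exists:
  fixes v :: "'p::finite \<Rightarrow> real^'n::finite"
  assumes "K \<noteq> {}" and "separating_apex v K f c0"
  obtains c where "separating_apex v K f c" and "mp_vertex v c"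
proof -
  obtain c where sep: "separating_apex v K f c"
    and max: "\<forall>c'. separating_apex v K f c' \<longrightarrow> apex_potential v K f c' \<le> apex_potential v K f c"
    using Lattices_Big.ex_has_greatest_nat[of "separating_apex v K f" c0 "apex_potential v K f"]
      assms(2) apex_potential_bound by blast
  have "mp_vertex v c"
  proof (rule ccontr)
    assume "\<not> mp_vertex v c"
    with assms(1) sep obtain c' where "separating_apex v K f c'"
      "apex_potential v K f c < apex_potential v K f c'"
      by (rule separating_apex_improvable)
    with max show False by (meson not_le)
  qed
  with sep show ?thesis by (rule that)
qed

theorem proposition4p6:
  fixes v :: "'p::finite \<Rightarrow> real^'n::finite" and y :: "ereal^'n"
  assumes "y \<in> rmax_vec" and "y \<notin> mp_cone v"
  shows "\<exists>I J (a::real^'n). I \<inter> J = {} \<and> I \<union> J = UNIV \<and>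
           mp_cone v \<subseteq> mp_halfspace I J a \<and> y \<notin> mp_halfspace I J a \<and>
           mp_vertex v (- a)"
proof -
  define K where "K = {k. y $ k \<noteq> - \<infinity>}"
  define f where "f k = real_of_ereal (y $ k)" for k
  have y: "y $ k = (if k \<in> K then ereal (f k) else - \<infinity>)" for k
    using assms(1) by (cases "y $ k") (auto simp: rmax_vec_def K_def f_def)
  have "K \<noteq> {}"
    using finite_coordinate_of_notin_mp_cone[OF assms(2)] by (simp add: K_def)
  obtain c0 where "separating_apex v K f c0"
    using separating_apex_exists[OF assms(2) y] .
  with \<open>K \<noteq> {}\<close> obtain c where sep: "separating_apex v K f c" and vertex: "mp_vertex v c"
    by (rule separating_vertex_exists)
  show ?thesis
  proof (intro exI conjI)
    show "mp_cone v \<subseteq> mp_halfspace (dev_argmax K f c) (- dev_argmax K f c) (- c)"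
      using sep unfolding separating_apex_def by (rule mp_cone_subset_halfspace)
    show "y \<notin> mp_halfspace (dev_argmax K f c) (- dev_argmax K f c) (- c)"
      using \<open>K \<noteq> {}\<close> y by (rule notin_mp_halfspace_dev_argmax)
    show "mp_vertex v (- (- c))" using vertex by simp
  qed auto
qed

end
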